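(* Let $(\Gamma,d)$ be as in the context, with shells $S_m$ and shadows $O(g)$. There exist $R,\Delta\ge0$ depending only on $(\Gamma,d)$ such that for all $n$ and all $r>n+\Delta$, for every $g\in S_r$, every $\xi\in O(g)$ and every $h\in S_n$, \[|\beta_\xi(h,e)-\beta_g(h,e)|\le R.\]
   Context: $\Gamma$ is a finitely generated group acting properly cocompactly by isometries on a proper quasiruled hyperbolic space $(X,d)$ with basepoint $x_0$, and $d(g,h)=d(g.x_0,h.x_0)$ makes $(\Gamma,d)$ a proper quasiruled hyperbolic space (points joined by $(\lambda,c)$-quasigeodesics which are $\tau$-quasirulers, i.e. $(z(s)|z(u))_{z(t)}\le\tau$ for $s<t<u$ with Gromov product $(x|y)_w=\frac12(d(x,w)+d(y,w)-d(x,y))$; quasitriangles uniformly thin). $\partial\Gamma$ is the visual boundary. For $z\in\Gamma$, $\beta_z(x,y)=d(z,x)-d(z,y)$; for $\xi\in\partial\Gamma$, $\beta_\xi(x,y)=\sup\limsup_{t\to\infty}(d(z(t),x)-d(z(t),y))$ over quasiruler rays $z$ from $y$ to $\xi$. $B_m=\{g:d(g,e)\le m\}$, $S_m=B_m\setminus B_{m-k}$ for a fixed $k$, and $O(g)=O_C(e,g)$ is the set of $\xi\in\partial\Gamma$ such that some quasiruler ray from $e$ to $\xi$ meets the closed $C$-ball about $g$, for a fixed constant $C\ge0$. *)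

theory Defs
  imports "HOL-Analysis.Analysis" "HOL-Algebra.Group_Action" "HOL-Algebra.Generated_Groups"
    "HOL-Library.Liminf_Limsup"
begin

definition gprod :: "('p \<Rightarrow> 'p \<Rightarrow> real) \<Rightarrow> 'p \<Rightarrow> 'p \<Rightarrow> 'p \<Rightarrow> real" where
  "gprod dd x y w = (dd x w + dd y w - dd x y) / 2"

definition quasigeod :: "('p \<Rightarrow> 'p \<Rightarrow> real) \<Rightarrow> real \<Rightarrow> real \<Rightarrow> real set \<Rightarrow> (real \<Rightarrow> 'p) \<Rightarrow> bool" where
  "quasigeod dd lam c I z \<longleftrightarrow>
     (\<forall>s\<in>I. \<forall>t\<in>I. \<bar>s - t\<bar> / lam - c \<le> dd (z s) (z t) \<and> dd (z s) (z t) \<le> lam * \<bar>s - t\<bar> + c)"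

definition quasiruler :: "('p \<Rightarrow> 'p \<Rightarrow> real) \<Rightarrow> real \<Rightarrow> real set \<Rightarrow> (real \<Rightarrow> 'p) \<Rightarrow> bool" where
  "quasiruler dd tau I z \<longleftrightarrow>
     (\<forall>s\<in>I. \<forall>t\<in>I. \<forall>u\<in>I. s < t \<and> t < u \<longrightarrow> gprod dd (z s) (z u) (z t) \<le> tau)"

definition quasiruled_space :: "('p \<Rightarrow> 'p \<Rightarrow> real) \<Rightarrow> 'p set \<Rightarrow> real \<Rightarrow> real \<Rightarrow> real \<Rightarrow> bool" where
  "quasiruled_space dd A lam c tau \<longleftrightarrow>
     (\<forall>x\<in>A. \<forall>y\<in>A. \<exists>L\<ge>0. \<exists>z. (\<forall>t\<in>{0..L}. z t \<in> A) \<and> z 0 = x \<and> z L = y \<and>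
        quasigeod dd lam c {0..L} z \<and> quasiruler dd tau {0..L} z)"

definition gromov_hyperbolic :: "('p \<Rightarrow> 'p \<Rightarrow> real) \<Rightarrow> 'p set \<Rightarrow> real \<Rightarrow> bool" where
  "gromov_hyperbolic dd A delta \<longleftrightarrow>
     (\<forall>x\<in>A. \<forall>y\<in>A. \<forall>z\<in>A. \<forall>w\<in>A.
        min (gprod dd x y w) (gprod dd y z w) - delta \<le> gprod dd x z w)"

definition qr_ray :: "('p \<Rightarrow> 'p \<Rightarrow> real) \<Rightarrow> 'p set \<Rightarrow> real \<Rightarrow> real \<Rightarrow> real \<Rightarrow> (real \<Rightarrow> 'p) \<Rightarrow> bool" where
  "qr_ray dd A lam c tau z \<longleftrightarrow>
     (\<forall>t\<ge>0. z t \<in> A) \<and> quasigeod dd lam c {0..} z \<and> quasiruler dd tau {0..} z"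

definition rays_equiv :: "('p \<Rightarrow> 'p \<Rightarrow> real) \<Rightarrow> (real \<Rightarrow> 'p) \<Rightarrow> (real \<Rightarrow> 'p) \<Rightarrow> bool" where
  "rays_equiv dd z w \<longleftrightarrow>
     (\<exists>K. (\<forall>s\<ge>0. \<exists>t\<ge>0. dd (z s) (w t) \<le> K) \<and> (\<forall>t\<ge>0. \<exists>s\<ge>0. dd (z s) (w t) \<le> K))"

definition vis_bdry :: "('p \<Rightarrow> 'p \<Rightarrow> real) \<Rightarrow> 'p set \<Rightarrow> real \<Rightarrow> real \<Rightarrow> real \<Rightarrow> (real \<Rightarrow> 'p) set set" where
  "vis_bdry dd A lam c tau =
     {{w. qr_ray dd A lam c tau w \<and> rays_equiv dd w z} | z. qr_ray dd A lam c tau z}"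

definition busemann_bdry :: "('p \<Rightarrow> 'p \<Rightarrow> real) \<Rightarrow> (real \<Rightarrow> 'p) set \<Rightarrow> 'p \<Rightarrow> 'p \<Rightarrow> real" where
  "busemann_bdry dd xi x y =
     real_of_ereal (SUP z \<in> {z \<in> xi. z 0 = y}.
        Limsup at_top (\<lambda>t::real. ereal (dd (z t) x - dd (z t) y)))"

definition busemann_pt :: "('p \<Rightarrow> 'p \<Rightarrow> real) \<Rightarrow> 'p \<Rightarrow> 'p \<Rightarrow> 'p \<Rightarrow> real" where
  "busemann_pt dd z x y = dd z x - dd z y"

definition ballB :: "('p \<Rightarrow> 'p \<Rightarrow> real) \<Rightarrow> 'p set \<Rightarrow> 'p \<Rightarrow> real \<Rightarrow> 'p set" where
  "ballB dd A e m = {g \<in> A. dd g e \<le> m}"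

definition shell :: "('p \<Rightarrow> 'p \<Rightarrow> real) \<Rightarrow> 'p set \<Rightarrow> 'p \<Rightarrow> real \<Rightarrow> real \<Rightarrow> 'p set" where
  "shell dd A e k m = ballB dd A e m - ballB dd A e (m - k)"

definition shadow :: "('p \<Rightarrow> 'p \<Rightarrow> real) \<Rightarrow> 'p set \<Rightarrow> real \<Rightarrow> real \<Rightarrow> real \<Rightarrow> real \<Rightarrow> 'p \<Rightarrow> 'p \<Rightarrow> (real \<Rightarrow> 'p) set set" where
  "shadow dd A lam c tau C e g =
     {xi \<in> vis_bdry dd A lam c tau. \<exists>z\<in>xi. z 0 = e \<and> (\<exists>t\<ge>0. dd (z t) g \<le> C)}"

definition finitely_generated :: "('g, 'b) monoid_scheme \<Rightarrow> bool" where
  "finitely_generated G \<longleftrightarrow> (\<exists>S. finite S \<and> S \<subseteq> carrier G \<and> generate G S = carrier G)"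

definition isom_proper_cocompact :: "('g, 'b) monoid_scheme \<Rightarrow> ('g \<Rightarrow> 'x::metric_space \<Rightarrow> 'x) \<Rightarrow> bool" where
  "isom_proper_cocompact G \<phi> \<longleftrightarrow>
     group_action G UNIV \<phi> \<and>
     (\<forall>g\<in>carrier G. \<forall>x y. dist (\<phi> g x) (\<phi> g y) = dist x y) \<and>
     (\<forall>K. compact K \<longrightarrow> finite {g \<in> carrier G. \<phi> g ` K \<inter> K \<noteq> {}}) \<and>
     (\<exists>K. compact K \<and> (\<Union>g\<in>carrier G. \<phi> g ` K) = UNIV)"

definition orbit_dist :: "('g \<Rightarrow> 'x::metric_space \<Rightarrow> 'x) \<Rightarrow> 'x \<Rightarrow> 'g \<Rightarrow> 'g \<Rightarrow> real" where
  "orbit_dist \<phi> x0 g h = dist (\<phi> g x0) (\<phi> h x0)"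

end

theory Submission
  imports Defs
begin

text \<open>
  If \<xi> lies in the shadow of g, a quasiruler ray from e to \<xi> passes within C of g, so by the
  quasiruler property and thinness every ray from e to \<xi> eventually has Gromov product with g,
  based at e, at least d(g,e) - C - \<tau> - \<delta>. A point p whose Gromov product with g exceeds
  d(h,e) + \<delta> sees h almost as g does: the Busemann values at p and at g of the pair (h,e) differ
  by at most 2\<delta>. Since g lies far beyond h, this applies to all late points of every ray to \<xi>,
  and taking limsup and supremum gives R = 2\<delta>, with \<Delta> = C + \<tau> + 2\<delta> + k.
\<close>

lemma gromov_hyperbolic_mono:
  assumes "gromov_hyperbolic dd A delta" and "delta \<le> delta'"
  shows "gromov_hyperbolic dd A delta'"
  using assms unfolding gromov_hyperbolic_def by (meson diff_left_mono order_trans)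

lemma Limsup_between_if_eventually_close:
  assumes "F \<noteq> bot" and "eventually (\<lambda>x. \<bar>f x - b\<bar> \<le> R) F"
  shows "ereal (b - R) \<le> Limsup F (\<lambda>x. ereal (f x)) \<and> Limsup F (\<lambda>x. ereal (f x)) \<le> ereal (b + R)"
proof
  show "ereal (b - R) \<le> Limsup F (\<lambda>x. ereal (f x))"
    by (rule le_Limsup[OF assms(1)]) (rule eventually_mono[OF assms(2)], simp)
  show "Limsup F (\<lambda>x. ereal (f x)) \<le> ereal (b + R)"
    by (rule Limsup_bounded) (rule eventually_mono[OF assms(2)], simp)
qed

lemma busemann_bdry_close:
  assumes "\<exists>z\<in>\<xi>. z 0 = y"
    and "\<And>z. z \<in> \<xi> \<Longrightarrow> z 0 = y \<Longrightarrow>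
      ereal (b - R) \<le> Limsup at_top (\<lambda>t::real. ereal (dd (z t) x - dd (z t) y)) \<and>
      Limsup at_top (\<lambda>t::real. ereal (dd (z t) x - dd (z t) y)) \<le> ereal (b + R)"
  shows "\<bar>busemann_bdry dd \<xi> x y - b\<bar> \<le> R"
proof -
  define S where "S = (SUP z \<in> {z \<in> \<xi>. z 0 = y}. Limsup at_top (\<lambda>t::real. ereal (dd (z t) x - dd (z t) y)))"
  obtain z where z: "z \<in> \<xi>" "z 0 = y" using assms(1) by blast
  have "S \<le> ereal (b + R)" unfolding S_def using assms(2) by (intro SUP_least) auto
  moreover have "ereal (b - R) \<le> S"
    unfolding S_def using z assms(2)[OF z] by (intro SUP_upper2[of z]) auto
  ultimately have "real_of_ereal S \<in> {b - R .. b + R}" by (cases S) auto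
  moreover have "busemann_bdry dd \<xi> x y = real_of_ereal S" unfolding busemann_bdry_def S_def ..
  ultimately show ?thesis by auto
qed

locale pseudometric =
  fixes d :: "'p \<Rightarrow> 'p \<Rightarrow> real"
  assumes d_sym: "d x y = d y x"
    and d_triangle: "d x z \<le> d x y + d y z"
begin

lemma gprod_commute: "gprod d x y w = gprod d y x w"
  unfolding gprod_def using d_sym[of x y] by simp

lemma gprod_le_dist: "gprod d x y w \<le> d y w"
proof -
  have "d x w \<le> d x y + d y w" by (rule d_triangle)
  then show ?thesis using d_sym[of y x] unfolding gprod_def by simp
qed

lemma busemann_pt_eq_gprod: "busemann_pt d p h e = d h e - 2 * gprod d p h e"
  unfolding busemann_pt_def gprod_def by (simp add: field_simps)

lemma qr_ray_escapes:
  assumes "qr_ray d A lam c tau w" and "lam > 0"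
  shows "eventually (\<lambda>s. d (w s) (w 0) > M) at_top"
proof (rule eventually_mono[OF eventually_ge_at_top[of "max 0 (lam * (M + c + 1))"]])
  fix s :: real assume s: "max 0 (lam * (M + c + 1)) \<le> s"
  then have "s \<in> {0..}" by simp
  then have "\<bar>s - 0\<bar> / lam - c \<le> d (w s) (w 0)"
    using assms(1) unfolding qr_ray_def quasigeod_def by blast
  moreover have "M + c + 1 \<le> s / lam" using s assms(2) by (simp add: field_simps)
  ultimately show "d (w s) (w 0) > M" using s by simp
qed

text \<open>A quasiruler through a point near g stays, beyond that point, almost on a geodesic
  from e through g, so its late points have Gromov product with g close to d(g,e).\<close>
lemma gprod_ge_beyond_near_point:
  assumes "quasiruler d tau {0..} z" and "z 0 = e" and "0 \<le> t0" and "t0 < t"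
    and "d (z t0) g \<le> C" and "tau \<ge> 0"
  shows "d g e - C - tau \<le> gprod d (z t) g e"
proof (cases "t0 = 0")
  case True
  have "d (z t) g \<le> d (z t) e + d e g" by (rule d_triangle)
  with True assms(2,5,6) d_sym[of g e] show ?thesis unfolding gprod_def by simp
next
  case False
  then have "gprod d e (z t) (z t0) \<le> tau"
    using assms(1-4) unfolding quasiruler_def by auto
  then have "d (z t0) e + d (z t) (z t0) - d (z t) e \<le> 2 * tau"
    unfolding gprod_def using d_sym[of e "z t0"] d_sym[of e "z t"] by simp
  moreover have "d (z t) g \<le> d (z t) (z t0) + d (z t0) g" by (rule d_triangle)
  moreover have "d g e \<le> d g (z t0) + d (z t0) e" by (rule d_triangle)
  ultimately have "d g e + d (z t) g \<le> d (z t) e + 2 * C + 2 * tau"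
    using assms(5) d_sym[of g "z t0"] by linarith
  then show ?thesis unfolding gprod_def by (simp add: field_simps)
qed

lemma vis_bdry_qr_ray:
  assumes "\<xi> \<in> vis_bdry d A lam c tau" and "z \<in> \<xi>"
  shows "qr_ray d A lam c tau z"
  using assms unfolding vis_bdry_def by auto

lemma vis_bdry_fellow_travel:
  assumes "\<xi> \<in> vis_bdry d A lam c tau" and "z \<in> \<xi>" and "w \<in> \<xi>"
  shows "\<exists>K. \<forall>s\<ge>0. \<exists>t\<ge>0. d (w s) (z t) \<le> K"
proof -
  obtain z1 where \<xi>: "\<xi> = {v. qr_ray d A lam c tau v \<and> rays_equiv d v z1}"
    using assms(1) unfolding vis_bdry_def by blast
  obtain K1 where K1: "\<forall>s\<ge>0. \<exists>u\<ge>0. d (w s) (z1 u) \<le> K1"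
    using assms(3) unfolding \<xi> rays_equiv_def by blast
  obtain K2 where K2: "\<forall>u\<ge>0. \<exists>t\<ge>0. d (z t) (z1 u) \<le> K2"
    using assms(2) unfolding \<xi> rays_equiv_def by blast
  have "\<exists>t\<ge>0. d (w s) (z t) \<le> K1 + K2" if "s \<ge> 0" for s
  proof -
    obtain u where "u \<ge> 0" "d (w s) (z1 u) \<le> K1" using K1 \<open>s \<ge> 0\<close> by blast
    moreover obtain t where "t \<ge> 0" "d (z t) (z1 u) \<le> K2" using K2 \<open>u \<ge> 0\<close> by blast
    moreover have "d (w s) (z t) \<le> d (w s) (z1 u) + d (z1 u) (z t)" by (rule d_triangle)
    ultimately have "d (w s) (z t) \<le> K1 + K2" using d_sym[of "z1 u" "z t"] by linarith
    with \<open>t \<ge> 0\<close> show ?thesis by blast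
  qed
  then show ?thesis by blast
qed

end

locale hyperbolic_pseudometric = pseudometric d
  for d :: "'p \<Rightarrow> 'p \<Rightarrow> real" +
  fixes A :: "'p set" and \<delta> :: real
  assumes hyperbolic: "gromov_hyperbolic d A \<delta>"
    and delta_nonneg: "\<delta> \<ge> 0"
begin

lemma gprod_four_point:
  "\<lbrakk>x \<in> A; y \<in> A; z \<in> A; w \<in> A\<rbrakk> \<Longrightarrow> min (gprod d x y w) (gprod d y z w) - \<delta> \<le> gprod d x z w"
  using hyperbolic unfolding gromov_hyperbolic_def by blast

text \<open>Late points of w lie near late points of z (beyond t0), and the bound of
  gprod_ge_beyond_near_point is transferred to w by the four-point condition.\<close>
lemma eventually_gprod_ge_fellow_ray:
  assumes z: "qr_ray d A lam c tau z" and "z 0 = e" and "0 \<le> t0" and "d (z t0) g \<le> C"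
    and w: "qr_ray d A lam c tau w" and "w 0 = e"
    and K: "\<forall>s\<ge>0. \<exists>t\<ge>0. d (w s) (z t) \<le> K"
    and "g \<in> A" and "e \<in> A" and "lam \<ge> 1" and "C \<ge> 0" and "tau \<ge> 0"
  shows "eventually (\<lambda>s. d g e - C - tau - \<delta> \<le> gprod d (w s) g e) at_top"
proof -
  define M where "M = max (lam * t0 + K + c) (d g e + K)"
  have "eventually (\<lambda>s. d (w s) e > M) at_top"
    using qr_ray_escapes[OF w, of M] assms(6,10) by simp
  then have "eventually (\<lambda>s. d (w s) e > M \<and> s \<ge> 0) at_top"
    by (rule eventually_conj[OF _ eventually_ge_at_top])
  then show ?thesis
  proof (rule eventually_mono)
    fix s :: real assume s: "d (w s) e > M \<and> s \<ge> 0"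
    then obtain t where t: "t \<ge> 0" "d (w s) (z t) \<le> K" using K by blast
    have "d (w s) e \<le> d (w s) (z t) + d (z t) e" by (rule d_triangle)
    then have far: "d (z t) e \<ge> d (w s) e - K" using t by simp
    have "d (z t) (z 0) \<le> lam * \<bar>t - 0\<bar> + c"
      using z t unfolding qr_ray_def quasigeod_def by (meson atLeast_iff order_refl)
    then have "lam * t > lam * t0" using far s assms(2) t unfolding M_def by simp
    then have "t0 < t" using assms(10) by simp
    then have on_z: "d g e - C - tau \<le> gprod d (z t) g e"
      using gprod_ge_beyond_near_point z assms(2-4,12) unfolding qr_ray_def by blast
    have "d g e - C - tau \<le> gprod d (w s) (z t) e"
      using far t s assms(11,12) unfolding gprod_def M_def by simp
    moreover have "w s \<in> A" "z t \<in> A" using w z s t unfolding qr_ray_def by auto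
    ultimately show "d g e - C - tau - \<delta> \<le> gprod d (w s) g e"
      using on_z gprod_four_point[of "w s" "z t" g e] assms(8,9) by linarith
  qed
qed

lemma busemann_pt_close:
  assumes "p \<in> A" "g \<in> A" "h \<in> A" "e \<in> A" and far: "d h e + \<delta> \<le> gprod d p g e"
  shows "\<bar>busemann_pt d p h e - busemann_pt d g h e\<bar> \<le> 2 * \<delta>"
proof -
  have "min (gprod d p g e) (gprod d g h e) - \<delta> \<le> gprod d p h e"
    and "min (gprod d g p e) (gprod d p h e) - \<delta> \<le> gprod d g h e"
    using gprod_four_point assms(1-4) by blast+
  then have "\<bar>gprod d p h e - gprod d g h e\<bar> \<le> \<delta>"
    using far gprod_le_dist[of g h e] gprod_le_dist[of p h e] gprod_commute[of g p e] delta_nonneg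
    by (auto simp: min_def split: if_splits)
  then show ?thesis unfolding busemann_pt_eq_gprod by linarith
qed

lemma busemann_bdry_shadow_close:
  assumes "\<xi> \<in> shadow d A lam c tau C e g" and "g \<in> A" "h \<in> A" "e \<in> A"
    and "d h e + C + tau + 2 * \<delta> \<le> d g e" and "lam \<ge> 1" "C \<ge> 0" "tau \<ge> 0"
  shows "\<bar>busemann_bdry d \<xi> h e - busemann_pt d g h e\<bar> \<le> 2 * \<delta>"
proof -
  obtain z t0 where \<xi>: "\<xi> \<in> vis_bdry d A lam c tau" and z: "z \<in> \<xi>" "z 0 = e"
    and t0: "0 \<le> t0" "d (z t0) g \<le> C"
    using assms(1) unfolding shadow_def by blast
  show ?thesis
  proof (rule busemann_bdry_close)
    show "\<exists>z\<in>\<xi>. z 0 = e" using z by blast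
    fix w assume w: "w \<in> \<xi>" "w 0 = e"
    obtain K where K: "\<forall>s\<ge>0. \<exists>t\<ge>0. d (w s) (z t) \<le> K"
      using vis_bdry_fellow_travel[OF \<xi> z(1) w(1)] by blast
    have wr: "qr_ray d A lam c tau w" using vis_bdry_qr_ray[OF \<xi> w(1)] .
    have "eventually (\<lambda>s. d g e - C - tau - \<delta> \<le> gprod d (w s) g e) at_top"
      using eventually_gprod_ge_fellow_ray[OF vis_bdry_qr_ray[OF \<xi> z(1)] z(2) t0 wr w(2) K]
        assms(2,4,6-8) by blast
    then have "eventually (\<lambda>s. d g e - C - tau - \<delta> \<le> gprod d (w s) g e \<and> s \<ge> 0) at_top"
      by (rule eventually_conj[OF _ eventually_ge_at_top])
    then have "eventually (\<lambda>s. \<bar>(d (w s) h - d (w s) e) - busemann_pt d g h e\<bar> \<le> 2 * \<delta>) at_top"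
    proof (rule eventually_mono)
      fix s assume s: "d g e - C - tau - \<delta> \<le> gprod d (w s) g e \<and> s \<ge> 0"
      then have "w s \<in> A" using wr unfolding qr_ray_def by simp
      with s show "\<bar>(d (w s) h - d (w s) e) - busemann_pt d g h e\<bar> \<le> 2 * \<delta>"
        using busemann_pt_close[of "w s" g h e] assms(2-5) unfolding busemann_pt_def by fastforce
    qed
    then show "ereal (busemann_pt d g h e - 2 * \<delta>) \<le> Limsup at_top (\<lambda>t. ereal (d (w t) h - d (w t) e)) \<and>
        Limsup at_top (\<lambda>t. ereal (d (w t) h - d (w t) e)) \<le> ereal (busemann_pt d g h e + 2 * \<delta>)"
      by (intro Limsup_between_if_eventually_close) simp_all
  qed
qed

end

lemma orbit_dist_pseudometric: "pseudometric (orbit_dist \<phi> x0)"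
  by unfold_locales (simp_all add: orbit_dist_def dist_commute dist_triangle2)

theorem mainTheorem9:
  fixes G :: "('g, 'b) monoid_scheme" and \<phi> :: "'g \<Rightarrow> 'x::metric_space \<Rightarrow> 'x"
    and x0 :: 'x and lam c tau k C :: real
  defines "d \<equiv> orbit_dist \<phi> x0"
  assumes "group G"
    and "finitely_generated G"
    and "isom_proper_cocompact G \<phi>"
    and "\<forall>x r. compact (cball (x::'x) r)"
    and "\<exists>lX cX tX. quasiruled_space dist (UNIV :: 'x set) lX cX tX"
    and "\<exists>dX. gromov_hyperbolic dist (UNIV :: 'x set) dX"
    and "lam \<ge> 1" and "c \<ge> 0" and "tau \<ge> 0"
    and "quasiruled_space d (carrier G) lam c tau"
    and "\<exists>delta. gromov_hyperbolic d (carrier G) delta"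
    and "k > 0" and "C \<ge> 0"
  shows "\<exists>R\<ge>0. \<exists>\<Delta>\<ge>0. \<forall>n r :: nat. real r > real n + \<Delta> \<longrightarrow>
           (\<forall>g \<in> shell d (carrier G) \<one>\<^bsub>G\<^esub> k (real r).
            \<forall>\<xi> \<in> shadow d (carrier G) lam c tau C \<one>\<^bsub>G\<^esub> g.
            \<forall>h \<in> shell d (carrier G) \<one>\<^bsub>G\<^esub> k (real n).
              \<bar>busemann_bdry d \<xi> h \<one>\<^bsub>G\<^esub> - busemann_pt d g h \<one>\<^bsub>G\<^esub>\<bar> \<le> R)"
proof -
  obtain delta where "gromov_hyperbolic d (carrier G) delta" using assms(12) by blast
  then have "gromov_hyperbolic d (carrier G) (max delta 0)" by (rule gromov_hyperbolic_mono) simp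
  moreover have "pseudometric d" unfolding d_def by (rule orbit_dist_pseudometric)
  ultimately interpret hyperbolic_pseudometric d "carrier G" "max delta 0"
    by (simp add: hyperbolic_pseudometric_def hyperbolic_pseudometric_axioms_def)
  have one: "\<one>\<^bsub>G\<^esub> \<in> carrier G" using assms(2) by (simp add: group.is_monoid monoid.one_closed)
  show ?thesis
  proof (rule exI[of _ "2 * max delta 0"], intro conjI exI[of _ "C + tau + 2 * max delta 0 + k"] allI impI ballI)
    show "0 \<le> C + tau + 2 * max delta 0 + k" using assms(10,13,14) by simp
    fix n r :: nat and g \<xi> h
    assume "real r > real n + (C + tau + 2 * max delta 0 + k)"
      and g: "g \<in> shell d (carrier G) \<one>\<^bsub>G\<^esub> k (real r)"
      and \<xi>: "\<xi> \<in> shadow d (carrier G) lam c tau C \<one>\<^bsub>G\<^esub> g"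
      and h: "h \<in> shell d (carrier G) \<one>\<^bsub>G\<^esub> k (real n)"
    moreover have "g \<in> carrier G" "h \<in> carrier G"
      "d g \<one>\<^bsub>G\<^esub> > real r - k" "d h \<one>\<^bsub>G\<^esub> \<le> real n"
      using g h unfolding shell_def ballB_def by auto
    ultimately have far: "d h \<one>\<^bsub>G\<^esub> + C + tau + 2 * max delta 0 \<le> d g \<one>\<^bsub>G\<^esub>"
      by linarith
    show "\<bar>busemann_bdry d \<xi> h \<one>\<^bsub>G\<^esub> - busemann_pt d g h \<one>\<^bsub>G\<^esub>\<bar> \<le> 2 * max delta 0"
      by (rule busemann_bdry_shadow_close[OF \<xi> \<open>g \<in> carrier G\<close> \<open>h \<in> carrier G\<close> one far
            assms(8,14,10)])
  qed simp
qed

end
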